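(* Let $c\in(0,\sqrt2)$ and let $$\Omega_{p,\theta}:=\{(p,\theta): p\in(0,1),\ \theta\in(\theta_{min}(c),\theta_2(c,p)),\ \theta\neq\theta_1(c,p)\},$$ where only those $p$ with $(\theta_{min}(c),\theta_2(c,p))\neq\emptyset$ are considered. Then $$\sup_{(p,\theta)\in\Omega_{p,\theta}} L(c,p,\theta)\le 1-\frac{c}{\pi}\left(\sqrt{2-c^2}+\theta_{min}(c)\right).$$
   Context: Let $\lambda=\frac{\sqrt{2-c^2}}{2}$ and $\omega=\frac{\sqrt{2+c^2}}{2}$ (so $\lambda^2+\omega^2=1$). Define $\zeta(s)=-e^{\lambda s}\bigl(\cos(\omega s)-\frac{\lambda}{\omega}\sin(\omega s)\bigr)$ (the solution of $z^{(4)}+c^2z''+z=0$ with $\zeta(0)=-1$, $\zeta'(0)=0$ decaying as $s\to-\infty$), let $t^*>0$ be the smallest $s>0$ with $\zeta(s)=-1$ (it satisfies $\omega t^*\in(\pi,2\pi)$), and set $\theta_{min}(c):=\zeta'(t^* )=e^{\lambda t^*}\sin(\omega t^* )/\omega<0$. Equivalently, $\theta_{min}(c)$ is the unique negative $\theta$ with $e^{2\lambda t^*}=\theta^2+2\lambda\theta+1$ where $t^*=\frac1\omega\bigl(\frac{3\pi}{2}-\arctan\frac{\lambda\theta+1}{\omega\theta}\bigr)$. For $p\in(0,1)$ put $\xi=pc^4/4$, $\kappa_1^2=\frac{c^2-\sqrt{c^4-4\xi}}{2}$, $\kappa_2^2=\frac{c^2+\sqrt{c^4-4\xi}}{2}$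 ($0<\kappa_1<\kappa_2$), $\theta_{1,2}(c,p)=\dfrac{-2\sqrt{2-c^2}}{2-c^2\mp c^2\sqrt{1-p}}$ (upper sign for $\theta_1$), and $$L(c,p,\theta)=\frac12\Bigl(1+\frac{\kappa_2}{\kappa_1}\Bigr)+\frac1\pi\arctan\!\left(\frac{\kappa_2(-\kappa_1^2+\xi+\xi\theta\sqrt{2-c^2})}{\xi(\theta\kappa_1^2+\sqrt{2-c^2}+\theta(1-c^2))}\right)-\frac{\kappa_2}{\kappa_1\pi}\arctan\!\left(\frac{\kappa_1(-\kappa_2^2+\xi+\xi\theta\sqrt{2-c^2})}{\xi(\theta\kappa_2^2+\sqrt{2-c^2}+\theta(1-c^2))}\right),$$ which is defined for $\theta\neq\theta_1,\theta_2$ (these are exactly the zeros of the two denominators). Even one-troughed solutions of $z^{(4)}+c^2z''+(z+1)^+-\xi(z+1)^--1=0$, $z,z'\to0$ at $\pm\infty$, correspond to solutions $\theta\in(\theta_{min}(c),\theta_2(c,p))$ of $L(c,p,\theta)=k$, $k\in\mathbb{N}$, where $\theta$ is the slope $z'(t_1)$ at the leftmost point $t_1$ with $z(t_1)=-1$. *)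

theory Defs
  imports "HOL-Analysis.Analysis"
begin

definition lam :: "real \<Rightarrow> real" where
  "lam c = sqrt (2 - c^2) / 2"

definition omg :: "real \<Rightarrow> real" where
  "omg c = sqrt (2 + c^2) / 2"

text \<open>The decaying solution zeta with zeta(0) = -1, zeta'(0) = 0.\<close>
definition zeta :: "real \<Rightarrow> real \<Rightarrow> real" where
  "zeta c s = - exp (lam c * s) * (cos (omg c * s) - lam c / omg c * sin (omg c * s))"

definition tstar :: "real \<Rightarrow> real" where
  "tstar c = Inf {s. s > 0 \<and> zeta c s = -1}"

definition theta_min :: "real \<Rightarrow> real" where
  "theta_min c = deriv (zeta c) (tstar c)"

definition xi :: "real \<Rightarrow> real \<Rightarrow> real" where
  "xi c p = p * c^4 / 4"

definition kappa1 :: "real \<Rightarrow> real \<Rightarrow> real" where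
  "kappa1 c p = sqrt ((c^2 - sqrt (c^4 - 4 * xi c p)) / 2)"

definition kappa2 :: "real \<Rightarrow> real \<Rightarrow> real" where
  "kappa2 c p = sqrt ((c^2 + sqrt (c^4 - 4 * xi c p)) / 2)"

definition theta1 :: "real \<Rightarrow> real \<Rightarrow> real" where
  "theta1 c p = - 2 * sqrt (2 - c^2) / (2 - c^2 - c^2 * sqrt (1 - p))"

definition theta2 :: "real \<Rightarrow> real \<Rightarrow> real" where
  "theta2 c p = - 2 * sqrt (2 - c^2) / (2 - c^2 + c^2 * sqrt (1 - p))"

definition L :: "real \<Rightarrow> real \<Rightarrow> real \<Rightarrow> real" where
  "L c p \<theta> =
    (let a = kappa1 c p; b = kappa2 c p; e = xi c p; r = sqrt (2 - c^2) in
     (1 + b / a) / 2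
     + arctan ((b * (e - a^2 + e * \<theta> * r)) / (e * (\<theta> * a^2 + r + \<theta> * (1 - c^2)))) / pi
     - b / (a * pi) * arctan ((a * (e - b^2 + e * \<theta> * r)) / (e * (\<theta> * b^2 + r + \<theta> * (1 - c^2)))))"

end

theory Submission
  imports Defs
begin

text \<open>Write \<open>a = \<kappa>\<^sub>1\<close>, \<open>b = \<kappa>\<^sub>2\<close>, \<open>r = \<surd>(2 - c\<^sup>2)\<close>. Then \<open>a\<^sup>2 + b\<^sup>2 = c\<^sup>2\<close> and \<open>\<xi> = a\<^sup>2 b\<^sup>2\<close>,
  so the argument of the second arctangent in \<open>L\<close> reduces to
  \<open>X = (a\<^sup>2(1 + \<theta> r) - 1) / (a (\<theta>(1 - a\<^sup>2) + r))\<close>, and \<open>\<theta> < \<theta>\<^sub>2\<close> says exactly that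
  \<open>\<theta>(1 - a\<^sup>2) + r < 0\<close>, whence \<open>X > 0\<close>. Bounding the first arctangent by \<open>\<pi>/2\<close> and using
  \<open>\<pi>/2 - arctan X \<le> 1/X\<close> gives \<open>L \<le> 1 + (b/a)/(\<pi> X)\<close>, and an elementary estimate turns
  \<open>(b/a)/X\<close> into \<open>-c(r + \<theta>)\<close>. This bound decreases in \<open>\<theta>\<close>, so \<open>\<theta> > \<theta>\<^sub>m\<^sub>i\<^sub>n\<close> finishes
  the proof.\<close>

lemma pi_half_minus_arctan_le_inverse:
  fixes x :: real
  assumes "x > 0"
  shows "pi/2 - arctan x \<le> 1/x"
proof -
  have "arctan (1/x) = pi/2 - arctan x"
    using arctan_inverse[of x] assms by (simp add: inverse_eq_divide)
  moreover have "arctan (1/x) \<le> 1/x"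
    using assms by (simp add: arctan_le_self)
  ultimately show ?thesis by simp
qed

lemma arctan_argument_reduce:
  fixes a b c r t :: real
  assumes "a \<noteq> 0" "b \<noteq> 0" "a^2 + b^2 = c^2"
  shows "(a * (a^2*b^2 - b^2 + a^2*b^2 * t * r)) / (a^2*b^2 * (t * b^2 + r + t * (1 - c^2)))
       = (a^2 * (1 + t*r) - 1) / (a * (t * (1 - a^2) + r))"
proof -
  have "a * (a^2*b^2 - b^2 + a^2*b^2 * t * r) = (a * b^2) * (a^2 * (1 + t*r) - 1)"
    by (simp add: algebra_simps power2_eq_square)
  moreover have "a^2*b^2 * (t * b^2 + r + t * (1 - c^2)) = (a * b^2) * (a * (t * (1 - a^2) + r))"
    unfolding assms(3)[symmetric] by (simp add: algebra_simps power2_eq_square)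
  ultimately show ?thesis
    using assms(1,2) by (simp only: mult_divide_mult_cancel_left_if) simp
qed

lemma inverse_ratio_le_linear:
  fixes A b c r t :: real
  assumes "0 \<le> A" "A < 1" "r > 0" "t * (1 - A) + r < 0" "0 \<le> b" "b \<le> c"
  shows "b * (t * (1 - A) + r) / (A * (1 + t*r) - 1) \<le> - c * (r + t)"
proof -
  define u where "u = - t"
  define D where "D = 1 - A * (1 + t*r)"
  have q: "u * (1 - A) - r > 0"
    using assms(4) unfolding u_def by simp
  hence "u * (1 - A) > 0" using assms(3) by linarith
  hence "u > 0" using assms(2) by (simp add: zero_less_mult_iff)
  hence "u * (1 - A) \<le> u"
    using assms(1) by (simp add: mult_left_le)
  hence ur: "u > r" using q by linarith
  have "t * r < 0" using ur assms(3) unfolding u_def by (simp add: mult_neg_pos)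
  hence "A * (1 + t*r) \<le> A"
    using assms(1) by (simp add: mult_left_le)
  hence D: "D > 0"
    unfolding D_def using assms(2) by linarith
  have "u * (1 - A) - r \<le> (u - r) * D"
  proof -
    have "(u - r) * D - (u * (1 - A) - r) = A * r * (1 + (u - r) * u)"
      unfolding D_def u_def by (simp add: algebra_simps)
    moreover have "A * r * (1 + (u - r) * u) \<ge> 0"
      using assms(1,3) ur by simp
    ultimately show ?thesis by linarith
  qed
  hence "b * (u * (1 - A) - r) \<le> c * ((u - r) * D)"
    using assms(5,6) q by (meson mult_mono less_imp_le order_trans)
  hence "b * (u * (1 - A) - r) / D \<le> c * (u - r)"
    using D by (simp add: pos_divide_le_eq mult.assoc)
  moreover have "t * (1 - A) + r = - (u * (1 - A) - r)" and "A * (1 + t*r) - 1 = - D"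
    unfolding u_def D_def by simp_all
  hence "b * (t * (1 - A) + r) / (A * (1 + t*r) - 1) = b * (u * (1 - A) - r) / D"
    by (simp only: mult_minus_right minus_divide_divide)
  ultimately show ?thesis
    unfolding u_def by (simp add: algebra_simps)
qed

lemma arctan_combination_le:
  fixes a b e r c t :: real
  assumes "a > 0" "b > 0" "c > 0" "e = a^2 * b^2" "a^2 + b^2 = c^2" "a^2 < 1" "r > 0"
    and "t * (1 - a^2) + r < 0"
  shows "(1 + b/a)/2 + arctan ((b * (e - a^2 + e*t*r)) / (e * (t*a^2 + r + t*(1 - c^2)))) / pi
     - b/(a*pi) * arctan ((a * (e - b^2 + e*t*r)) / (e * (t*b^2 + r + t*(1 - c^2))))
     \<le> 1 - c/pi * (r + t)"
proof -
  define X where "X = (a^2 * (1 + t*r) - 1) / (a * (t * (1 - a^2) + r))"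
  define Y where "Y = arctan ((b * (e - a^2 + e*t*r)) / (e * (t*a^2 + r + t*(1 - c^2))))"
  have X: "(a * (e - b^2 + e*t*r)) / (e * (t*b^2 + r + t*(1 - c^2))) = X"
    unfolding X_def assms(4) using assms(1,2,5) by (intro arctan_argument_reduce) auto
  have "t < 0"
  proof -
    have "t * (1 - a^2) < 0" using assms(7,8) by linarith
    thus ?thesis using assms(6) by (simp add: mult_less_0_iff)
  qed
  hence "a^2 * (1 + t*r) \<le> a^2"
    using assms(7) by (intro mult_left_le) (auto simp: mult_nonpos_nonneg)
  hence "a^2 * (1 + t*r) - 1 < 0"
    using assms(6) by linarith
  hence Xpos: "X > 0"
    unfolding X_def using assms(1,8) by (simp add: divide_neg_neg mult_pos_neg)
  have "b^2 \<le> c^2"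
    using assms(5) by (metis le_add_same_cancel2 zero_le_power2)
  hence b_le_c: "b \<le> c"
    using assms(3) by (auto intro: power2_le_imp_le[OF _ less_imp_le])
  have "b/a * (pi/2 - arctan X) \<le> b/a * (1/X)"
    using pi_half_minus_arctan_le_inverse[OF Xpos] assms(1,2) by (intro mult_left_mono) auto
  also have "\<dots> = b * (t * (1 - a^2) + r) / (a^2 * (1 + t*r) - 1)"
    unfolding X_def using assms(1) by (simp add: power2_eq_square)
  also have "\<dots> \<le> - c * (r + t)"
    using assms(2,6-8) b_le_c by (intro inverse_ratio_le_linear) auto
  finally have "b/a * (pi/2 - arctan X) \<le> - c * (r + t)" .
  moreover have "Y \<le> pi/2"
    unfolding Y_def using arctan_ubound less_imp_le by blast
  ultimately have "1/2 + Y/pi + b/a * (pi/2 - arctan X) / pi \<le> 1/2 + (pi/2)/pi + (- c * (r + t))/pi"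
    by (intro add_mono divide_right_mono) auto
  moreover have "(1 + b/a)/2 + Y/pi - b/(a*pi) * arctan X = 1/2 + Y/pi + b/a * (pi/2 - arctan X) / pi"
    using pi_gt_zero assms(1) by (simp add: field_simps)
  ultimately have "(1 + b/a)/2 + Y/pi - b/(a*pi) * arctan X \<le> 1 - c/pi * (r + t)"
    by (simp add: field_simps)
  thus ?thesis
    unfolding X Y_def .
qed

lemma kappa_eq:
  fixes c p :: real
  assumes "p \<le> 1"
  shows "kappa1 c p = sqrt (c^2 * (1 - sqrt (1 - p)) / 2)"
    and "kappa2 c p = sqrt (c^2 * (1 + sqrt (1 - p)) / 2)"
proof -
  have "c^4 - 4 * xi c p = (c^2 * sqrt (1 - p))^2"
    using assms by (simp add: xi_def algebra_simps flip: power_mult)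
  hence "sqrt (c^4 - 4 * xi c p) = c^2 * sqrt (1 - p)"
    using assms by (simp add: abs_mult)
  thus "kappa1 c p = sqrt (c^2 * (1 - sqrt (1 - p)) / 2)"
    and "kappa2 c p = sqrt (c^2 * (1 + sqrt (1 - p)) / 2)"
    unfolding kappa1_def kappa2_def by (simp_all add: algebra_simps)
qed

lemma L_le_linear_bound:
  fixes c p \<theta> :: real
  assumes "0 < c" "c^2 < 2" "0 < p" "p < 1" "\<theta> < theta2 c p"
  shows "L c p \<theta> \<le> 1 - c/pi * (sqrt (2 - c^2) + \<theta>)"
proof -
  define a b s where "a = kappa1 c p" and "b = kappa2 c p" and "s = sqrt (1 - p)"
  have s: "0 < s" "s < 1" "s^2 = 1 - p"
    unfolding s_def using assms(3,4) by auto
  have a: "a = sqrt (c^2 * (1 - s) / 2)" and b: "b = sqrt (c^2 * (1 + s) / 2)"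
    unfolding a_def b_def s_def using kappa_eq assms(4) by auto
  have "c^2 * (1 - s) / 2 > 0" "c^2 * (1 + s) / 2 > 0"
    using assms(1) s by auto
  hence pos: "a > 0" "b > 0" and a2: "a^2 = c^2 * (1 - s) / 2" and b2: "b^2 = c^2 * (1 + s) / 2"
    unfolding a b by auto
  have p: "p = 1 - s^2" using s(3) by simp
  have "xi c p = a^2 * b^2"
    unfolding a2 b2 xi_def p by (simp add: field_simps power2_eq_square power4_eq_xxxx)
  moreover have "a^2 + b^2 = c^2"
    unfolding a2 b2 by (simp add: field_simps)
  moreover have "a^2 < 1"
  proof -
    have "a^2 \<le> c^2 / 2" unfolding a2 using s by (simp add: mult_left_le)
    thus ?thesis using assms(2) by linarith
  qed
  moreover have "\<theta> * (1 - a^2) + sqrt (2 - c^2) < 0"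
  proof -
    have den: "2 - c^2 + c^2 * s > 0"
      using assms(2) s by (simp add: add_pos_nonneg)
    have "\<theta> < - 2 * sqrt (2 - c^2) / (2 - c^2 + c^2 * s)"
      using assms(5) unfolding theta2_def s_def .
    hence "\<theta> * (2 - c^2 + c^2 * s) < - 2 * sqrt (2 - c^2)"
      by (simp only: pos_less_divide_eq[OF den])
    thus ?thesis
      unfolding a2 by (simp add: algebra_simps)
  qed
  moreover have "sqrt (2 - c^2) > 0" using assms(2) by simp
  ultimately show ?thesis
    unfolding L_def Let_def a_def[symmetric] b_def[symmetric]
    using arctan_combination_le pos assms(1) by blast
qed

theorem lemma4:
  fixes c :: real
  assumes "0 < c" and "c < sqrt 2"
  shows "\<forall>p \<theta>. 0 < p \<and> p < 1 \<and> theta_min c < \<theta> \<and> \<theta> < theta2 c p \<and> \<theta> \<noteq> theta1 c p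
           \<longrightarrow> L c p \<theta> \<le> 1 - c / pi * (sqrt (2 - c^2) + theta_min c)"
proof (intro allI impI)
  fix p \<theta> :: real
  assume h: "0 < p \<and> p < 1 \<and> theta_min c < \<theta> \<and> \<theta> < theta2 c p \<and> \<theta> \<noteq> theta1 c p"
  have "c^2 < 2"
    using assms power_strict_mono[of c "sqrt 2" 2] by simp
  hence "L c p \<theta> \<le> 1 - c/pi * (sqrt (2 - c^2) + \<theta>)"
    using L_le_linear_bound assms(1) h by blast
  also have "\<dots> \<le> 1 - c/pi * (sqrt (2 - c^2) + theta_min c)"
    using h assms(1) by (intro diff_left_mono mult_left_mono) auto
  finally show "L c p \<theta> \<le> 1 - c / pi * (sqrt (2 - c^2) + theta_min c)" .
qed
end
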